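(* For any simple graph $G$ whose vertices are among the variables of $S=\mathbb{K}[x_1,\dots,x_n]$, $\mathbb{K}$ a field, we have $\operatorname{sreg}(S/I(G))\le\operatorname{cochord}(G)$.
   Context: A graph is chordal if every induced cycle has length 3, and co-chordal if its complement graph is chordal. The co-chordal cover number $\operatorname{cochord}(G)$ is the minimum number of co-chordal subgraphs of $G$ whose edge sets cover $E(G)$. $I(G)=(xy : \{x,y\}\in E(G))$ is the edge ideal. Stanley regularity: for a squarefree monomial ideal $I\subset S$, a squarefree Stanley decomposition of $S/I$ is a decomposition $S/I=\bigoplus_{i=1}^r u_i\mathbb{K}[Z_i]$ as $\mathbb{K}$-vector spaces, where $Z_i\subseteq\{x_1,\dots,x_n\}$, $u_i$ are (images of) squarefree monomials with $\operatorname{supp}(u_i)\subseteq Z_i$, and each $u_i\mathbb{K}[Z_i]$ is free over $\mathbb{K}[Z_i]$. Its Stanley regularity is $\max_i\deg(u_i)$, and $\operatorname{sreg}(S/I)$ is the minimum over all such decompositions. *)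

theory Defs
  imports Main "HOL-Library.Poly_Mapping"
begin

definition simple_graph_on :: "'v set \<Rightarrow> 'v set set \<Rightarrow> bool" where
  "simple_graph_on V E \<longleftrightarrow> (\<forall>e\<in>E. \<exists>u v. e = {u, v} \<and> u \<noteq> v \<and> u \<in> V \<and> v \<in> V)"

definition adj :: "'v set set \<Rightarrow> 'v \<Rightarrow> 'v \<Rightarrow> bool" where
  "adj E u v \<longleftrightarrow> {u, v} \<in> E"

definition compl_graph :: "'v set \<Rightarrow> 'v set set \<Rightarrow> 'v set set" where
  "compl_graph V E = {{u, v} | u v. u \<in> V \<and> v \<in> V \<and> u \<noteq> v \<and> {u, v} \<notin> E}"

definition induced_cycle :: "'v set \<Rightarrow> 'v set set \<Rightarrow> 'v list \<Rightarrow> bool" where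
  "induced_cycle V E vs \<longleftrightarrow>
     distinct vs \<and> length vs \<ge> 3 \<and> set vs \<subseteq> V \<and>
     (\<forall>i < length vs. adj E (vs ! i) (vs ! ((i + 1) mod length vs))) \<and>
     (\<forall>i < length vs. \<forall>j < length vs. adj E (vs ! i) (vs ! j) \<longrightarrow>
         j = (i + 1) mod length vs \<or> i = (j + 1) mod length vs)"

definition chordal :: "'v set \<Rightarrow> 'v set set \<Rightarrow> bool" where
  "chordal V E \<longleftrightarrow> (\<forall>vs. induced_cycle V E vs \<longrightarrow> length vs = 3)"

definition cochordal :: "'v set \<Rightarrow> 'v set set \<Rightarrow> bool" where
  "cochordal V E \<longleftrightarrow> chordal V (compl_graph V E)"

definition cochord :: "'v set \<Rightarrow> 'v set set \<Rightarrow> nat" where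
  "cochord V E = (LEAST k. \<exists>Hs :: 'v set set list. length Hs = k \<and>
      (\<forall>H \<in> set Hs. H \<subseteq> E \<and> cochordal V H) \<and> \<Union>(set Hs) = E)"

type_synonym 'k mpoly = "(nat \<Rightarrow>\<^sub>0 nat) \<Rightarrow>\<^sub>0 'k"

text \<open>K[Z]: polynomials only involving variables in Z. S = K[x_0..x_(n-1)] is polys_in {..<n}.\<close>
definition polys_in :: "nat set \<Rightarrow> ('k::zero) mpoly set" where
  "polys_in Z = {p. \<forall>m \<in> Poly_Mapping.keys p. Poly_Mapping.keys (m :: nat \<Rightarrow>\<^sub>0 nat) \<subseteq> Z}"

definition var :: "nat \<Rightarrow> ('k::{zero,one}) mpoly" where
  "var i = Poly_Mapping.single (Poly_Mapping.single i 1) 1"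

definition sqfree_mono :: "nat set \<Rightarrow> ('k::{zero,one}) mpoly" where
  "sqfree_mono U = Poly_Mapping.single (\<Sum>i\<in>U. Poly_Mapping.single i 1) 1"

definition edge_ideal :: "nat \<Rightarrow> nat set set \<Rightarrow> ('k::comm_ring_1) mpoly set" where
  "edge_ideal n E = {(\<Sum>e\<in>E. q e * sqfree_mono e) | q. \<forall>e. q e \<in> polys_in {..<n}}"

text \<open>A squarefree Stanley decomposition of S/I is a list of pairs (U_i, Z_i), standing for the
  summand u_i K[Z_i] with u_i = x_(U_i), supp(u_i) = U_i \<subseteq> Z_i \<subseteq> {x_0..x_(n-1)}, such that
  (spanning) S/I is the sum of the subspaces u_i K[Z_i],
  (direct)   the sum is direct,
  (free)     each u_i K[Z_i] is free over K[Z_i], i.e. p \<mapsto> u_i p : K[Z_i] \<rightarrow> S/I is injective.\<close>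
definition stanley_decomp :: "'k itself \<Rightarrow> nat \<Rightarrow> ('k::field) mpoly set \<Rightarrow> (nat set \<times> nat set) list \<Rightarrow> bool" where
  "stanley_decomp _ n I D \<longleftrightarrow>
     (\<forall>i < length D. fst (D!i) \<subseteq> snd (D!i) \<and> snd (D!i) \<subseteq> {..<n}) \<and>
     (\<forall>f \<in> polys_in {..<n}. \<exists>g :: nat \<Rightarrow> 'k mpoly.
         (\<forall>i < length D. g i \<in> polys_in (snd (D!i))) \<and>
         f - (\<Sum>i<length D. sqfree_mono (fst (D!i)) * g i) \<in> I) \<and>
     (\<forall>g :: nat \<Rightarrow> 'k mpoly.
         (\<forall>i < length D. g i \<in> polys_in (snd (D!i))) \<and>
         (\<Sum>i<length D. sqfree_mono (fst (D!i)) * g i) \<in> I \<longrightarrow>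
         (\<forall>i < length D. sqfree_mono (fst (D!i)) * g i \<in> I)) \<and>
     (\<forall>i < length D. \<forall>p \<in> polys_in (snd (D!i)). sqfree_mono (fst (D!i)) * p \<in> I \<longrightarrow> p = 0)"

definition sreg :: "'k itself \<Rightarrow> nat \<Rightarrow> ('k::field) mpoly set \<Rightarrow> nat" where
  "sreg K n I = (LEAST d. \<exists>D. stanley_decomp K n I D \<and> (\<forall>(U, Z) \<in> set D. card U \<le> d))"

end

theory Submission
  imports Defs
begin

text \<open>Cover E by k = cochord(G) co-chordal graphs H_1, ..., H_k. The complement of each H_i is
  chordal and so has a perfect elimination order r_i. For an independent set F of G let m_i be the
  r_i-least vertex of F, put U_F = {m_1, ..., m_k}, and let Z_F consist of the vertices which, for
  every i, are m_i or an r_i-later non-neighbour of m_i in H_i. The perfect elimination property makes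
  Z_F independent, F \<subseteq> Z_F, and every F' with U_F \<subseteq> F' \<subseteq> Z_F has the same minima as F. Hence the
  intervals [U_F, Z_F] partition the independence complex of G, with |U_F| \<le> k. Since the monomials
  outside I(G) are exactly those with independent support, such a partition yields the squarefree
  Stanley decomposition of S/I(G) with summands u_F K[Z_F], u_F the product of the variables in U_F.\<close>

lemma adj_commute: "adj C u v \<longleftrightarrow> adj C v u"
  by (simp add: adj_def insert_commute)

lemma simple_graph_on_adjD:
  assumes "simple_graph_on V C" "adj C u v"
  shows "u \<noteq> v" "u \<in> V" "v \<in> V"
proof -
  from assms obtain a b where e: "{u, v} = {a, b}" "a \<noteq> b" "a \<in> V" "b \<in> V"
    unfolding simple_graph_on_def adj_def by blast
  then show "u \<noteq> v" by (metis doubleton_eq_iff)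
  have "u \<in> {a, b}" "v \<in> {a, b}" using e(1) by blast+
  then show "u \<in> V" "v \<in> V" using e by auto
qed

lemma simple_graph_on_subset_Pow: "simple_graph_on V E \<Longrightarrow> E \<subseteq> Pow V"
  unfolding simple_graph_on_def by auto

lemma simple_graph_on_mono: "simple_graph_on V E \<Longrightarrow> H \<subseteq> E \<Longrightarrow> simple_graph_on V H"
  unfolding simple_graph_on_def by auto

definition induced_subgraph :: "'v set set \<Rightarrow> 'v set \<Rightarrow> 'v set set" where
  "induced_subgraph C W = {e \<in> C. e \<subseteq> W}"

lemma adj_induced_subgraph: "adj (induced_subgraph C W) u v \<longleftrightarrow> adj C u v \<and> u \<in> W \<and> v \<in> W"
  by (auto simp: adj_def induced_subgraph_def)

lemma simple_graph_on_induced_subgraph: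
  assumes "simple_graph_on V C"
  shows "simple_graph_on W (induced_subgraph C W)"
  unfolding simple_graph_on_def
proof
  fix e assume "e \<in> induced_subgraph C W"
  then have "e \<in> C" "e \<subseteq> W" by (auto simp: induced_subgraph_def)
  then obtain u v where "e = {u, v}" "u \<noteq> v" using assms unfolding simple_graph_on_def by blast
  then show "\<exists>u v. e = {u, v} \<and> u \<noteq> v \<and> u \<in> W \<and> v \<in> W" using \<open>e \<subseteq> W\<close> by blast
qed

lemma chordal_induced_subgraph:
  assumes "chordal V C" "W \<subseteq> V"
  shows "chordal W (induced_subgraph C W)"
  unfolding chordal_def
proof (intro allI impI)
  fix vs assume cyc: "induced_cycle W (induced_subgraph C W) vs"
  have in_W: "vs ! i \<in> W" if "i < length vs" for i
    using cyc that unfolding induced_cycle_def by (meson nth_mem subsetD)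
  have "induced_cycle V C vs"
    unfolding induced_cycle_def
  proof (intro conjI allI impI)
    show "distinct vs" "3 \<le> length vs" using cyc by (simp_all add: induced_cycle_def)
    show "set vs \<subseteq> V" using cyc assms(2) by (auto simp: induced_cycle_def)
    fix i assume i: "i < length vs"
    show "adj C (vs ! i) (vs ! ((i + 1) mod length vs))"
      using cyc i unfolding induced_cycle_def adj_induced_subgraph by blast
    fix j assume j: "j < length vs" and "adj C (vs ! i) (vs ! j)"
    then have "adj (induced_subgraph C W) (vs ! i) (vs ! j)"
      using in_W i by (simp add: adj_induced_subgraph)
    then show "j = (i + 1) mod length vs \<or> i = (j + 1) mod length vs"
      using cyc i j unfolding induced_cycle_def by blast
  qed
  then show "length vs = 3" using assms(1) by (simp add: chordal_def)
qed

definition clique :: "'v set set \<Rightarrow> 'v set \<Rightarrow> bool" where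
  "clique C K \<longleftrightarrow> (\<forall>u\<in>K. \<forall>v\<in>K. u \<noteq> v \<longrightarrow> adj C u v)"

definition simplicial :: "'v set set \<Rightarrow> 'v \<Rightarrow> bool" where
  "simplicial C x \<longleftrightarrow> clique C {u. adj C x u}"

lemma simplicial_induced_subgraph:
  assumes "simplicial (induced_subgraph C W) x" "x \<in> W" "{u. adj C x u} \<subseteq> W"
  shows "simplicial C x"
  unfolding simplicial_def clique_def
proof (intro ballI impI)
  fix u w assume "u \<in> {u. adj C x u}" "w \<in> {u. adj C x u}" "u \<noteq> w"
  then have "adj (induced_subgraph C W) x u" "adj (induced_subgraph C W) x w"
    using assms(2,3) by (auto simp: adj_induced_subgraph)
  then have "adj (induced_subgraph C W) u w"
    using assms(1) \<open>u \<noteq> w\<close> unfolding simplicial_def clique_def by blast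
  then show "adj C u w" by (simp add: adj_induced_subgraph)
qed

definition induced_path :: "'v set set \<Rightarrow> 'v list \<Rightarrow> bool" where
  "induced_path C P \<longleftrightarrow> distinct P \<and> (\<forall>i. Suc i < length P \<longrightarrow> adj C (P!i) (P!Suc i)) \<and>
     (\<forall>i j. Suc i < j \<longrightarrow> j < length P \<longrightarrow> \<not> adj C (P!i) (P!j))"

context
  fixes C :: "'v set set" and P :: "'v list" and b :: 'v
  assumes irrefl: "\<And>u. \<not> adj C u u"
    and path: "induced_path C P" "length P \<ge> 3"
    and b_ends: "adj C b (P!0)" "adj C b (P!(length P - 1))"
    and b_interior: "\<And>i. 0 < i \<Longrightarrow> Suc i < length P \<Longrightarrow> \<not> adj C b (P!i)"
begin

lemma induced_path_snoc_consecutive: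
  assumes "i < Suc (length P)"
  shows "adj C ((P @ [b]) ! i) ((P @ [b]) ! ((i + 1) mod Suc (length P)))"
proof -
  consider "Suc i < length P" | "Suc i = length P" | "i = length P" using assms by linarith
  then show ?thesis
  proof cases
    case 1 then show ?thesis using path(1) by (simp add: induced_path_def nth_append)
  next
    case 2
    then have "i = length P - 1" by simp
    then show ?thesis using 2 b_ends(2) adj_commute[of C b "P!i"] by (simp add: nth_append)
  next
    case 3
    moreover have "P \<noteq> []" using path(2) by auto
    ultimately show ?thesis using b_ends(1) by (simp add: nth_append)
  qed
qed

lemma induced_path_snoc_chordless:
  assumes i: "i < Suc (length P)" and j: "j < Suc (length P)" and a: "adj C ((P @ [b]) ! i) ((P @ [b]) ! j)"
  shows "j = (i + 1) mod Suc (length P) \<or> i = (j + 1) mod Suc (length P)"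
proof -
  consider "i < length P" "j < length P" | "i = length P" "j < length P"
    | "i < length P" "j = length P" | "i = length P" "j = length P" using i j by linarith
  then show ?thesis
  proof cases
    case 1
    then have a': "adj C (P!i) (P!j)" using a by (simp add: nth_append)
    have "i \<noteq> j" using a' irrefl by auto
    moreover have "\<not> Suc i < j" "\<not> Suc j < i"
      using path(1) a' adj_commute[of C "P!i"] 1 unfolding induced_path_def by auto
    ultimately have "j = Suc i \<or> i = Suc j" by linarith
    then show ?thesis using 1 by auto
  next
    case 2
    then have "adj C b (P!j)" using a by (simp add: nth_append)
    then have "j = 0 \<or> Suc j = length P" using b_interior[of j] 2 by linarith
    then show ?thesis using 2 by auto
  next
    case 3
    then have "adj C b (P!i)" using a adj_commute[of C b "P!i"] by (simp add: nth_append)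
    then have "i = 0 \<or> Suc i = length P" using b_interior[of i] 3 by linarith
    then show ?thesis using 3 by auto
  next
    case 4 then show ?thesis using a irrefl by simp
  qed
qed

end

lemma chordal_no_closing_vertex:
  assumes sg: "simple_graph_on V C" and ch: "chordal V C"
    and P: "induced_path C P" "length P \<ge> 3" "set P \<subseteq> V"
    and b: "b \<in> V" "b \<notin> set P" "adj C b (P!0)" "adj C b (P!(length P - 1))"
    and b_interior: "\<And>i. 0 < i \<Longrightarrow> Suc i < length P \<Longrightarrow> \<not> adj C b (P!i)"
  shows False
proof -
  have irrefl: "\<And>u. \<not> adj C u u" using simple_graph_on_adjD[OF sg] by blast
  note snoc = induced_path_snoc_consecutive[OF irrefl P(1,2) b(3,4) b_interior]
    induced_path_snoc_chordless[OF irrefl P(1,2) b(3,4) b_interior]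
  have "induced_cycle V C (P @ [b])"
    using P b(1,2) snoc unfolding induced_cycle_def induced_path_def by auto
  then have "length (P @ [b]) = 3" using ch unfolding chordal_def by blast
  then show False using P(2) by simp
qed

definition walk_through :: "'v set set \<Rightarrow> 'v set \<Rightarrow> 'v \<Rightarrow> 'v \<Rightarrow> 'v list \<Rightarrow> bool" where
  "walk_through C A x y P \<longleftrightarrow> length P \<ge> 2 \<and> P!0 = x \<and> P!(length P - 1) = y \<and>
    (\<forall>i. Suc i < length P \<longrightarrow> adj C (P!i) (P!Suc i)) \<and> (\<forall>i. 0 < i \<longrightarrow> Suc i < length P \<longrightarrow> P!i \<in> A)"

lemma walk_through_set:
  assumes "walk_through C A x y P"
  shows "set P \<subseteq> insert x (insert y A)"
proof
  fix z assume "z \<in> set P"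
  then obtain i where i: "i < length P" "P!i = z" by (auto simp: in_set_conv_nth)
  have P: "P!0 = x" "P!(length P - 1) = y" "\<And>i. 0 < i \<Longrightarrow> Suc i < length P \<Longrightarrow> P!i \<in> A"
    using assms by (auto simp: walk_through_def)
  consider "i = 0" | "i = length P - 1" | "0 < i" "Suc i < length P" using i by linarith
  then show "z \<in> insert x (insert y A)" using P i by cases auto
qed

lemma walk_through_snoc:
  assumes "walk_through C A x y P" "y \<in> A" "adj C y z"
  shows "walk_through C A x z (P @ [z])"
proof -
  have P: "length P \<ge> 2" "P!0 = x" "P!(length P - 1) = y"
    "\<And>i. Suc i < length P \<Longrightarrow> adj C (P!i) (P!Suc i)" "\<And>i. 0 < i \<Longrightarrow> Suc i < length P \<Longrightarrow> P!i \<in> A"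
    using assms(1) by (auto simp: walk_through_def)
  have "adj C ((P @ [z])!i) ((P @ [z])!Suc i)" if "Suc i < Suc (length P)" for i
  proof (cases "Suc i < length P")
    case True then show ?thesis using P(4) by (simp add: nth_append)
  next
    case False
    then have "i = length P - 1" using that by simp
    moreover have "P \<noteq> []" using P(1) by auto
    ultimately show ?thesis using P(3) assms(3) by (simp add: nth_append)
  qed
  moreover have "(P @ [z])!i \<in> A" if "0 < i" "Suc i < Suc (length P)" for i
  proof (cases "Suc i < length P")
    case True then show ?thesis using P(5) that by (simp add: nth_append)
  next
    case False
    then have "i = length P - 1" using that by simp
    moreover have "P \<noteq> []" using P(1) by auto
    ultimately show ?thesis using P(3) assms(2) by (simp add: nth_append)
  qed
  moreover have "P \<noteq> []" using P(1) by auto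
  ultimately show ?thesis using P(1,2) by (simp add: walk_through_def nth_append)
qed

lemma walk_through_rtranclp:
  assumes "(\<lambda>u v. adj C u v \<and> u \<in> A \<and> v \<in> A)\<^sup>*\<^sup>* u v" "u \<in> A" "adj C x u"
  shows "\<exists>P. walk_through C A x v P"
  using assms(1)
proof (induction rule: rtranclp_induct)
  case base
  have "walk_through C A x u [x, u]" using assms(3) by (simp add: walk_through_def)
  then show ?case by blast
next
  case (step y z)
  then obtain P where "walk_through C A x y P" by blast
  then have "walk_through C A x z (P @ [z])"
    using step.hyps(2) by (intro walk_through_snoc) auto
  then show ?case by blast
qed

lemma nth_take_Suc_append_drop:
  assumes "i < j" "j \<le> length P"
  shows "length (take (Suc i) P @ drop j P) = Suc i + (length P - j)"
    and "t < Suc i \<Longrightarrow> (take (Suc i) P @ drop j P) ! t = P ! t"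
    and "Suc i \<le> t \<Longrightarrow> t < Suc i + (length P - j) \<Longrightarrow> (take (Suc i) P @ drop j P) ! t = P ! (t - Suc i + j)"
  using assms by (auto simp: nth_append min_def ac_simps)

lemma walk_through_shortcut:
  assumes P: "walk_through C A x y P" and ij: "i < j" "j \<le> length P" "2 \<le> Suc i + (length P - j)"
    and jump: "j < length P \<Longrightarrow> adj C (P!i) (P!j)" and last: "j = length P \<Longrightarrow> P!i = y"
  shows "walk_through C A x y (take (Suc i) P @ drop j P)"
proof -
  define Q where "Q = take (Suc i) P @ drop j P"
  note Q = nth_take_Suc_append_drop[OF ij(1,2), folded Q_def]
  have P_ends: "P!0 = x" "P!(length P - 1) = y"
    and P_adj: "\<And>t. Suc t < length P \<Longrightarrow> adj C (P!t) (P!Suc t)"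
    and P_interior: "\<And>t. 0 < t \<Longrightarrow> Suc t < length P \<Longrightarrow> P!t \<in> A"
    using P by (auto simp: walk_through_def)
  have "Q!(length Q - 1) = y"
  proof (cases "j < length P")
    case True
    then show ?thesis using Q(1) Q(3)[of "length Q - 1"] P_ends(2) ij(1) by simp
  qed (use Q(1) Q(2)[of i] last ij in simp)
  moreover have "adj C (Q!t) (Q!Suc t)" if t: "Suc t < length Q" for t
  proof -
    consider "Suc t < Suc i" | "t = i" | "Suc i \<le> t" by linarith
    then show ?thesis
    proof cases
      case 1 then show ?thesis using Q(2) P_adj[of t] ij by simp
    next
      case 2 then show ?thesis using Q(1-3) jump t by simp
    next
      case 3
      then have "Suc t - Suc i + j = Suc (t - Suc i + j)" by simp
      then show ?thesis using Q(1) Q(3)[of t] Q(3)[of "Suc t"] P_adj[of "t - Suc i + j"] 3 t by simp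
    qed
  qed
  moreover have "Q!t \<in> A" if t: "0 < t" "Suc t < length Q" for t
  proof (cases "t < Suc i")
    case True then show ?thesis using Q(1,2) P_interior t ij by simp
  next
    case False then show ?thesis using Q(1,3) P_interior[of "t - Suc i + j"] t ij(1) by simp
  qed
  ultimately show ?thesis
    using Q(1) Q(2)[of 0] P_ends(1) ij(3) unfolding walk_through_def Q_def[symmetric] by simp
qed

lemma shortest_walk_through_distinct:
  assumes P: "walk_through C A x y P" and "x \<noteq> y"
    and shortest: "\<And>Q. walk_through C A x y Q \<Longrightarrow> length P \<le> length Q"
  shows "distinct P"
proof -
  have P_ends: "length P \<ge> 2" "P!0 = x" "P!(length P - 1) = y"
    and P_adj: "\<And>i. Suc i < length P \<Longrightarrow> adj C (P!i) (P!Suc i)"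
    using P by (auto simp: walk_through_def)
  have no_repeat: "P!i \<noteq> P!j" if ij: "i < j" "j < length P" for i j
  proof
    assume eq: "P!i = P!j"
    have len: "2 \<le> Suc i + (length P - Suc j)"
    proof (rule ccontr)
      assume "\<not> ?thesis"
      then have "i = 0" "j = length P - 1" using ij by linarith+
      then show False using eq P_ends(2,3) \<open>x \<noteq> y\<close> by metis
    qed
    have jump: "adj C (P!i) (P!Suc j)" if "Suc j < length P"
      using P_adj[OF that] eq by simp
    have last: "P!i = y" if "Suc j = length P"
      using eq P_ends(3) that by (metis diff_Suc_1)
    have "walk_through C A x y (take (Suc i) P @ drop (Suc j) P)"
      using ij by (intro walk_through_shortcut[OF P _ _ len jump last]) simp_all
    then have "length P \<le> length (take (Suc i) P @ drop (Suc j) P)" by (rule shortest)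
    then show False using ij by simp
  qed
  show ?thesis
    unfolding distinct_conv_nth
  proof (intro allI impI)
    fix i j assume "i < length P" "j < length P" "i \<noteq> j"
    then consider "i < j" "j < length P" | "j < i" "i < length P" by linarith
    then show "P!i \<noteq> P!j"
      by cases (use no_repeat[of i j] no_repeat[of j i] in simp_all)
  qed
qed

lemma walk_through_imp_induced_path:
  assumes P: "walk_through C A x y P" and xy: "x \<noteq> y" "\<not> adj C x y"
  shows "\<exists>P. walk_through C A x y P \<and> induced_path C P \<and> length P \<ge> 3"
proof -
  obtain P0 where P0: "walk_through C A x y P0"
    and shortest: "\<And>Q. walk_through C A x y Q \<Longrightarrow> length P0 \<le> length Q"
    using ex_has_least_nat[of "walk_through C A x y" P length] P by blast
  have P0_ends: "length P0 \<ge> 2" "P0!0 = x" "P0!(length P0 - 1) = y"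
    and P0_adj: "\<And>i. Suc i < length P0 \<Longrightarrow> adj C (P0!i) (P0!Suc i)"
    using P0 by (auto simp: walk_through_def)
  have "length P0 \<ge> 3"
  proof (rule ccontr)
    assume "\<not> ?thesis"
    then have "length P0 = 2" using P0_ends by linarith
    then show False using P0_ends P0_adj[of 0] xy by simp
  qed
  moreover have "\<not> adj C (P0!i) (P0!j)" if ij: "Suc i < j" "j < length P0" for i j
  proof
    assume "adj C (P0!i) (P0!j)"
    then have "walk_through C A x y (take (Suc i) P0 @ drop j P0)"
      using ij by (intro walk_through_shortcut[OF P0]) simp_all
    then have "length P0 \<le> length (take (Suc i) P0 @ drop j P0)" by (rule shortest)
    then show False using ij by simp
  qed
  moreover have "distinct P0" using shortest_walk_through_distinct[OF P0 xy(1) shortest] .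
  ultimately show ?thesis using P0 P0_adj by (auto simp: induced_path_def)
qed

lemma chordal_common_neighbours_adj:
  assumes sg: "simple_graph_on V C" and ch: "chordal V C"
    and A: "A \<subseteq> V" "b \<notin> A" "\<And>a. a \<in> A \<Longrightarrow> \<not> adj C a b"
    and s: "s1 \<in> V" "s2 \<in> V" "s1 \<noteq> s2" "adj C b s1" "adj C b s2"
    and walk: "walk_through C A s1 s2 P"
  shows "adj C s1 s2"
proof (rule ccontr)
  assume "\<not> adj C s1 s2"
  then obtain Q where Q: "walk_through C A s1 s2 Q" "induced_path C Q" "length Q \<ge> 3"
    using walk_through_imp_induced_path[OF walk s(3)] by blast
  have Q_ends: "Q!0 = s1" "Q!(length Q - 1) = s2"
    and Q_interior: "\<And>i. 0 < i \<Longrightarrow> Suc i < length Q \<Longrightarrow> Q!i \<in> A"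
    using Q(1) by (auto simp: walk_through_def)
  have Q_set: "set Q \<subseteq> insert s1 (insert s2 A)" by (rule walk_through_set[OF Q(1)])
  have "b \<noteq> s1" "b \<noteq> s2" using simple_graph_on_adjD(1)[OF sg] s(4,5) by auto
  show False
  proof (rule chordal_no_closing_vertex[OF sg ch Q(2,3)])
    show "set Q \<subseteq> V" using Q_set A(1) s(1,2) by auto
    show "b \<in> V" using simple_graph_on_adjD(2)[OF sg s(4)] .
    show "b \<notin> set Q" using Q_set A(2) \<open>b \<noteq> s1\<close> \<open>b \<noteq> s2\<close> by auto
    show "adj C b (Q!0)" "adj C b (Q!(length Q - 1))" using s(4,5) Q_ends by simp_all
    show "\<not> adj C b (Q!i)" if "0 < i" "Suc i < length Q" for i
      using A(3)[OF Q_interior[OF that]] adj_commute by metis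
  qed
qed

lemma chordal_attachments_clique:
  assumes sg: "simple_graph_on V C" and ch: "chordal V C"
    and W: "W \<subseteq> V" "b \<notin> W" "\<And>w. w \<in> W \<Longrightarrow> \<not> adj C w b"
    and A: "A \<subseteq> W" "\<And>u v. u \<in> A \<Longrightarrow> v \<in> A \<Longrightarrow> (\<lambda>u v. adj C u v \<and> u \<in> W \<and> v \<in> W)\<^sup>*\<^sup>* u v"
    and S: "\<And>s. s \<in> S \<Longrightarrow> s \<in> V \<and> adj C s b \<and> (\<exists>u\<in>A. adj C s u)"
  shows "clique C S"
  unfolding clique_def
proof (intro ballI impI)
  fix s1 s2 assume s: "s1 \<in> S" "s2 \<in> S" "s1 \<noteq> s2"
  obtain u1 u2 where u: "u1 \<in> A" "adj C s1 u1" "u2 \<in> A" "adj C s2 u2"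
    using S[OF s(1)] S[OF s(2)] by blast
  have "u1 \<in> W" "u2 \<in> W" using A(1) u(1,3) by auto
  obtain P where "walk_through C W s1 u2 P"
    using walk_through_rtranclp[OF A(2)[OF u(1,3)] \<open>u1 \<in> W\<close> u(2)] by blast
  then have "walk_through C W s1 s2 (P @ [s2])"
    using \<open>u2 \<in> W\<close> u(4) adj_commute by (metis walk_through_snoc)
  moreover have "s1 \<in> V" "s2 \<in> V" "adj C b s1" "adj C b s2"
    using S[OF s(1)] S[OF s(2)] adj_commute[of C b s1] adj_commute[of C b s2] by auto
  ultimately show "adj C s1 s2"
    using chordal_common_neighbours_adj[OF sg ch W] s(3) by blast
qed

lemma connected_component_exists:
  assumes "a \<in> W"
  shows "\<exists>A. a \<in> A \<and> A \<subseteq> W \<and> (\<forall>u\<in>A. \<forall>v\<in>A. (\<lambda>u v. adj C u v \<and> u \<in> W \<and> v \<in> W)\<^sup>*\<^sup>* u v) \<and>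
    (\<forall>u\<in>A. \<forall>v\<in>W. adj C u v \<longrightarrow> v \<in> A)"
proof -
  define R where "R = (\<lambda>u v. adj C u v \<and> u \<in> W \<and> v \<in> W)"
  define A where "A = {v. R\<^sup>*\<^sup>* a v}"
  have "A \<subseteq> W"
  proof
    fix v assume "v \<in> A"
    then have "R\<^sup>*\<^sup>* a v" by (simp add: A_def)
    then show "v \<in> W" using assms by (induction rule: rtranclp_induct) (auto simp: R_def)
  qed
  moreover have "symp R" by (auto simp: symp_def R_def adj_commute)
  then have "R\<^sup>*\<^sup>* u v" if "u \<in> A" "v \<in> A" for u v
    using that sympD[OF symp_rtranclp, of R a u] by (auto simp: A_def)
  moreover have "v \<in> A" if "u \<in> A" "v \<in> W" "adj C u v" for u v
    using that \<open>A \<subseteq> W\<close> by (auto simp: A_def R_def intro: rtranclp.rtrancl_into_rtrancl)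
  ultimately show ?thesis unfolding R_def by (intro exI[of _ A]) (auto simp: A_def)
qed

lemma chordal_simplicial_nonneighbour:
  assumes sg: "simple_graph_on V C" and ch: "chordal V C"
    and IH: "\<And>W C' K. W \<subset> V \<Longrightarrow> simple_graph_on W C' \<Longrightarrow> chordal W C' \<Longrightarrow> K \<subseteq> W \<Longrightarrow>
      clique C' K \<Longrightarrow> W - K \<noteq> {} \<Longrightarrow> \<exists>x\<in>W - K. simplicial C' x"
    and ab: "a \<in> V" "b \<in> V" "a \<noteq> b" "\<not> adj C a b"
  shows "\<exists>x\<in>V. x \<noteq> b \<and> \<not> adj C x b \<and> simplicial C x"
proof -
  txt \<open>A is the component of a in G - N[b]. Its attachments S lie in N(b) and form a clique,
    so induction on G[A \<union> S] yields a vertex of A that is simplicial already in G.\<close>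
  define W where "W = V - insert b {u. adj C u b}"
  have W: "W \<subseteq> V" "b \<notin> W" "\<And>w. w \<in> W \<Longrightarrow> \<not> adj C w b" by (auto simp: W_def)
  have "a \<in> W" using ab by (auto simp: W_def adj_commute)
  from connected_component_exists[OF this, of C] obtain A where A: "a \<in> A" "A \<subseteq> W"
    "\<forall>u\<in>A. \<forall>v\<in>A. (\<lambda>u v. adj C u v \<and> u \<in> W \<and> v \<in> W)\<^sup>*\<^sup>* u v"
    and A_closed: "\<forall>u\<in>A. \<forall>v\<in>W. adj C u v \<longrightarrow> v \<in> A"
    by (elim exE conjE)
  define S where "S = {s \<in> V. s \<notin> A \<and> (\<exists>u\<in>A. adj C s u)}"
  have S_adj_b: "adj C s b" if s: "s \<in> S" for s
  proof -
    obtain u where u: "u \<in> A" "adj C s u" "s \<in> V" "s \<notin> A"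
      using s unfolding S_def by blast
    then have "s \<notin> W" using A_closed[rule_format, of u s] u(1,2,4) adj_commute[of C s u] by blast
    moreover have "s \<noteq> b" using u(1,2) A(2) W(3)[of u] adj_commute[of C s u] by auto
    ultimately show ?thesis using u(3) by (auto simp: W_def)
  qed
  have "clique C S"
    using S_adj_b by (intro chordal_attachments_clique[OF sg ch W A(2) A(3)[rule_format]]) (auto simp: S_def)
  define W' where "W' = A \<union> S"
  have "b \<notin> W'"
    using S_adj_b simple_graph_on_adjD(1)[OF sg, of b b] A(2) W(2) by (auto simp: W'_def)
  then have "W' \<subset> V" using A(2) W(1) ab(2) by (auto simp: W'_def S_def)
  have "\<exists>x\<in>W' - S. simplicial (induced_subgraph C W') x"
  proof (rule IH[OF \<open>W' \<subset> V\<close>])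
    show "simple_graph_on W' (induced_subgraph C W')" by (rule simple_graph_on_induced_subgraph[OF sg])
    show "chordal W' (induced_subgraph C W')"
      by (rule chordal_induced_subgraph[OF ch]) (use \<open>W' \<subset> V\<close> in blast)
    show "S \<subseteq> W'" by (simp add: W'_def)
    show "clique (induced_subgraph C W') S"
      using \<open>clique C S\<close> by (auto simp: clique_def adj_induced_subgraph W'_def)
    show "W' - S \<noteq> {}" using A(1) by (auto simp: W'_def S_def)
  qed
  moreover have "W' - S = A" by (auto simp: W'_def S_def)
  ultimately obtain x where x: "x \<in> A" "simplicial (induced_subgraph C W') x" by auto
  have "{u. adj C x u} \<subseteq> W'"
    using x(1) simple_graph_on_adjD(3)[OF sg] adj_commute by (fastforce simp: W'_def S_def)
  then have "simplicial C x"
    using simplicial_induced_subgraph[OF x(2)] x(1) by (auto simp: W'_def)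
  moreover have "x \<in> W" using x(1) A(2) by blast
  ultimately show ?thesis using adj_commute by (auto simp: W_def)
qed

lemma chordal_simplicial_outside_clique:
  assumes "finite V" "simple_graph_on V C" "chordal V C" "K \<subseteq> V" "clique C K" "V - K \<noteq> {}"
  shows "\<exists>x\<in>V - K. simplicial C x"
  using assms
proof (induction V arbitrary: C K rule: finite_psubset_induct)
  case (psubset V)
  note sg = psubset.prems(1) and ch = psubset.prems(2)
  show ?case
  proof (cases "\<forall>u\<in>V. \<forall>w\<in>V. u \<noteq> w \<longrightarrow> adj C u w")
    case True
    obtain v where v: "v \<in> V - K" using psubset.prems(5) by blast
    have "simplicial C v"
      unfolding simplicial_def clique_def using True simple_graph_on_adjD[OF sg] by blast
    then show ?thesis using v by blast
  next
    case False
    txt \<open>Dirac: a non-complete chordal graph has two non-adjacent simplicial vertices,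
      and they cannot both lie in the clique K.\<close>
    then obtain a b where ab: "a \<in> V" "b \<in> V" "a \<noteq> b" "\<not> adj C a b" by blast
    have nonneighbour: "\<exists>x\<in>V. x \<noteq> b' \<and> \<not> adj C x b' \<and> simplicial C x"
      if "a' \<in> V" "b' \<in> V" "a' \<noteq> b'" "\<not> adj C a' b'" for a' b'
      using chordal_simplicial_nonneighbour[OF sg ch psubset.IH that] by blast
    obtain x where x: "x \<in> V" "x \<noteq> b" "\<not> adj C x b" "simplicial C x"
      using nonneighbour[OF ab] by blast
    obtain y where y: "y \<in> V" "y \<noteq> x" "\<not> adj C y x" "simplicial C y"
      using nonneighbour[OF ab(2) x(1)] x(2,3) adj_commute by metis
    have "x \<notin> K \<or> y \<notin> K"
      using psubset.prems(4) y(2,3) by (auto simp: clique_def)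
    then show ?thesis using x y by blast
  qed
qed

definition perfect_elimination_order :: "'v set \<Rightarrow> 'v set set \<Rightarrow> ('v \<Rightarrow> nat) \<Rightarrow> bool" where
  "perfect_elimination_order V C r \<longleftrightarrow> inj_on r V \<and> (\<forall>v\<in>V. clique C {w. adj C v w \<and> r v < r w})"

lemma chordal_perfect_elimination_order:
  assumes "finite V" "simple_graph_on V C" "chordal V C"
  shows "\<exists>r. perfect_elimination_order V C r"
  using assms
proof (induction V arbitrary: C rule: finite_psubset_induct)
  case (psubset V)
  note sg = psubset.prems(1) and ch = psubset.prems(2)
  show ?case
  proof (cases "V = {}")
    case True
    then show ?thesis by (auto simp: perfect_elimination_order_def)
  next
    case False
    then obtain s where s: "s \<in> V" "simplicial C s"
      using chordal_simplicial_outside_clique[OF psubset.hyps sg ch, of "{}"] by (auto simp: clique_def)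
    define V' where "V' = V - {s}"
    have "V' \<subset> V" using s by (auto simp: V'_def)
    then obtain r' where r': "perfect_elimination_order V' (induced_subgraph C V') r'"
      using psubset.IH simple_graph_on_induced_subgraph[OF sg] chordal_induced_subgraph[OF ch]
      by blast
    define r where "r v = (if v = s then 0 else Suc (r' v))" for v
    have "inj_on r V"
      using r' by (auto simp: perfect_elimination_order_def inj_on_def r_def V'_def)
    moreover have "clique C {w. adj C v w \<and> r v < r w}" if v: "v \<in> V" for v
    proof (cases "v = s")
      case True
      then show ?thesis using s(2) by (auto simp: simplicial_def clique_def)
    next
      case False
      have "{w. adj C v w \<and> r v < r w} = {w. adj (induced_subgraph C V') v w \<and> r' v < r' w}"
        using False v simple_graph_on_adjD(3)[OF sg] by (auto simp: r_def V'_def adj_induced_subgraph)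
      moreover have "clique (induced_subgraph C V') {w. adj (induced_subgraph C V') v w \<and> r' v < r' w}"
        using r' v False by (auto simp: perfect_elimination_order_def V'_def)
      ultimately show ?thesis by (auto simp: clique_def adj_induced_subgraph)
    qed
    ultimately show ?thesis by (auto simp: perfect_elimination_order_def)
  qed
qed

lemma adj_compl_graph: "adj (compl_graph V H) u v \<longleftrightarrow> u \<in> V \<and> v \<in> V \<and> u \<noteq> v \<and> {u, v} \<notin> H"
proof
  assume "adj (compl_graph V H) u v"
  then obtain u' v' where uv: "{u, v} = {u', v'}" "u' \<in> V" "v' \<in> V" "u' \<noteq> v'" "{u', v'} \<notin> H"
    unfolding adj_def compl_graph_def by blast
  then have "u \<in> {u', v'}" "v \<in> {u', v'}" "u \<noteq> v" by (blast, blast, metis doubleton_eq_iff)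
  then show "u \<in> V \<and> v \<in> V \<and> u \<noteq> v \<and> {u, v} \<notin> H" using uv by auto
qed (auto simp: adj_def compl_graph_def)

lemma simple_graph_on_compl_graph: "simple_graph_on V (compl_graph V H)"
  unfolding simple_graph_on_def compl_graph_def by blast

lemma cochordal_singleton: "cochordal V {e}"
  unfolding cochordal_def chordal_def
proof (intro allI impI)
  fix vs assume cyc: "induced_cycle V (compl_graph V {e}) vs"
  define L where "L = length vs"
  have L: "L \<ge> 3" and in_V: "\<And>i. i < L \<Longrightarrow> vs!i \<in> V"
    and dist: "\<And>i j. i < L \<Longrightarrow> j < L \<Longrightarrow> i \<noteq> j \<Longrightarrow> vs!i \<noteq> vs!j"
    using cyc unfolding induced_cycle_def L_def by (auto simp: nth_eq_iff_index_eq)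
  have chord_eq_e: "{vs!i, vs!j} = e"
    if "i < L" "j < L" "i \<noteq> j" "j \<noteq> (i + 1) mod L" "i \<noteq> (j + 1) mod L" for i j
  proof -
    have "\<not> adj (compl_graph V {e}) (vs!i) (vs!j)"
      using cyc that unfolding induced_cycle_def L_def by blast
    then show ?thesis using in_V dist that by (auto simp: adj_compl_graph)
  qed
  show "length vs = 3"
  proof (rule ccontr)
    assume "length vs \<noteq> 3"
    then have "L \<ge> 4" using L L_def by simp
    then have "(3 + 1) mod L \<noteq> 1" by (cases "L = 4") simp_all
    then have "{vs!0, vs!2} = {vs!1, vs!3}"
      using chord_eq_e[of 0 2] chord_eq_e[of 1 3] \<open>L \<ge> 4\<close> by simp
    moreover have "vs!0 \<noteq> vs!1" "vs!0 \<noteq> vs!3" using dist \<open>L \<ge> 4\<close> by simp_all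
    ultimately show False by (metis insertI1 insert_iff singletonD)
  qed
qed

lemma cochord_attained:
  assumes "finite E"
  shows "\<exists>Hs. length Hs = cochord V E \<and> (\<forall>H\<in>set Hs. H \<subseteq> E \<and> cochordal V H) \<and> \<Union>(set Hs) = E"
proof -
  obtain es where "set es = E" using finite_list[OF assms] by blast
  then have "(\<forall>H\<in>set (map (\<lambda>e. {e}) es). H \<subseteq> E \<and> cochordal V H) \<and> \<Union>(set (map (\<lambda>e. {e}) es)) = E"
    by (auto simp: cochordal_singleton)
  then have "\<exists>k Hs. length Hs = k \<and> (\<forall>H\<in>set Hs. H \<subseteq> E \<and> cochordal V H) \<and> \<Union>(set Hs) = E"
    by blast
  then show ?thesis unfolding cochord_def by (rule LeastI_ex)
qed

definition indep :: "'v set set \<Rightarrow> 'v set \<Rightarrow> bool" where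
  "indep E F \<longleftrightarrow> (\<forall>e\<in>E. \<not> e \<subseteq> F)"

lemma indep_subset: "indep E F \<Longrightarrow> G \<subseteq> F \<Longrightarrow> indep E G"
  unfolding indep_def by blast

lemma indep_antimono: "indep E F \<Longrightarrow> H \<subseteq> E \<Longrightarrow> indep H F"
  unfolding indep_def by blast

lemma clique_insert: "clique C (insert v K) \<longleftrightarrow> clique C K \<and> (\<forall>u\<in>K. u \<noteq> v \<longrightarrow> adj C v u)"
  unfolding clique_def using adj_commute by fastforce

lemma indep_if_clique_compl_graph:
  assumes "simple_graph_on V H" "clique (compl_graph V H) K"
  shows "indep H K"
  unfolding indep_def
proof (intro ballI notI)
  fix e assume "e \<in> H" "e \<subseteq> K"
  moreover obtain u w where "e = {u, w}" "u \<noteq> w"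
    using assms(1) \<open>e \<in> H\<close> unfolding simple_graph_on_def by blast
  ultimately have "adj (compl_graph V H) u w" using assms(2) unfolding clique_def by blast
  then show False using \<open>e \<in> H\<close> \<open>e = {u, w}\<close> by (simp add: adj_compl_graph)
qed

definition later_non_neighbours :: "'v set \<Rightarrow> 'v set set \<Rightarrow> ('v \<Rightarrow> nat) \<Rightarrow> 'v \<Rightarrow> 'v set" where
  "later_non_neighbours V H r v = insert v {w. adj (compl_graph V H) v w \<and> r v < r w}"

lemma later_non_neighbours_subset: "v \<in> V \<Longrightarrow> later_non_neighbours V H r v \<subseteq> V"
  by (auto simp: later_non_neighbours_def adj_compl_graph)

lemma indep_later_non_neighbours:
  assumes "simple_graph_on V H" "perfect_elimination_order V (compl_graph V H) r" "v \<in> V"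
  shows "indep H (later_non_neighbours V H r v)"
proof (rule indep_if_clique_compl_graph[OF assms(1)])
  show "clique (compl_graph V H) (later_non_neighbours V H r v)"
    using assms(2,3) unfolding later_non_neighbours_def clique_insert perfect_elimination_order_def
    by blast
qed

lemma subset_later_non_neighbours_arg_min:
  assumes "inj_on r V" "F \<subseteq> V" "finite F" "F \<noteq> {}" "indep H F"
  shows "F \<subseteq> later_non_neighbours V H r (arg_min_on r F)"
proof
  fix w assume w: "w \<in> F"
  define m where "m = arg_min_on r F"
  have m: "m \<in> F" "r m \<le> r w"
    using arg_min_if_finite(1)[OF assms(3,4)] arg_min_least[OF assms(3,4) w] by (simp_all add: m_def)
  show "w \<in> later_non_neighbours V H r m"
  proof (cases "w = m")
    case False
    have "m \<in> V" "w \<in> V" using m(1) w assms(2) by auto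
    then have "r m \<noteq> r w" using inj_onD[OF assms(1)] False by metis
    then have "r m < r w" using m(2) by simp
    moreover have "{m, w} \<subseteq> F" using m(1) w by simp
    then have "{m, w} \<notin> H" using assms(5) unfolding indep_def by blast
    ultimately show ?thesis
      using False \<open>m \<in> V\<close> \<open>w \<in> V\<close> by (simp add: later_non_neighbours_def adj_compl_graph)
  qed (simp add: later_non_neighbours_def)
qed

lemma arg_min_on_later_non_neighbours:
  assumes "inj_on r V" "v \<in> V" "v \<in> G" "G \<subseteq> later_non_neighbours V H r v"
  shows "arg_min_on r G = v"
  unfolding arg_min_on_def
proof (rule arg_min_inj_eq)
  have "G \<subseteq> V" using later_non_neighbours_subset[OF assms(2)] assms(4) by blast
  then show "inj_on r {x. x \<in> G}" using assms(1) by (simp add: inj_on_subset)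
  show "\<forall>y. y \<in> G \<longrightarrow> r v \<le> r y"
    using assms(4) by (auto simp: later_non_neighbours_def)
qed (rule assms(3))

definition interval_partition :: "'v set set \<Rightarrow> ('v set \<times> 'v set) list \<Rightarrow> bool" where
  "interval_partition \<Delta> D \<longleftrightarrow> (\<forall>i<length D. fst (D!i) \<subseteq> snd (D!i) \<and> snd (D!i) \<in> \<Delta>) \<and>
     (\<forall>G\<in>\<Delta>. \<exists>!i. i < length D \<and> fst (D!i) \<subseteq> G \<and> G \<subseteq> snd (D!i))"

lemma interval_partition_of_closure:
  assumes "finite \<Delta>"
    and closure: "\<And>F. F \<in> \<Delta> \<Longrightarrow> L F \<subseteq> F \<and> F \<subseteq> R F \<and> R F \<in> \<Delta>"
    and stable: "\<And>F G. F \<in> \<Delta> \<Longrightarrow> L F \<subseteq> G \<Longrightarrow> G \<subseteq> R F \<Longrightarrow> L G = L F \<and> R G = R F"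
  shows "\<exists>D. interval_partition \<Delta> D \<and> set D = (\<lambda>F. (L F, R F)) ` \<Delta>"
proof -
  obtain D where D: "set D = (\<lambda>F. (L F, R F)) ` \<Delta>" "distinct D"
    using finite_distinct_list[of "(\<lambda>F. (L F, R F)) ` \<Delta>"] assms(1) by auto
  have D_nth: "\<exists>F\<in>\<Delta>. D!i = (L F, R F)" if "i < length D" for i
  proof -
    have "D!i \<in> (\<lambda>F. (L F, R F)) ` \<Delta>" using nth_mem[OF that] D(1) by simp
    then show ?thesis by blast
  qed
  have "fst (D!i) \<subseteq> snd (D!i) \<and> snd (D!i) \<in> \<Delta>" if i: "i < length D" for i
  proof -
    obtain F where "F \<in> \<Delta>" "D!i = (L F, R F)" using D_nth[OF i] by blast
    then show ?thesis using closure[of F] by auto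
  qed
  moreover have "\<exists>!i. i < length D \<and> fst (D!i) \<subseteq> G \<and> G \<subseteq> snd (D!i)" if G: "G \<in> \<Delta>" for G
  proof (rule ex_ex1I)
    have "(L G, R G) \<in> set D" using G D(1) by simp
    then obtain j where "j < length D" "D!j = (L G, R G)" by (auto simp: in_set_conv_nth)
    then show "\<exists>j. j < length D \<and> fst (D!j) \<subseteq> G \<and> G \<subseteq> snd (D!j)"
      using closure[OF G] by (intro exI[of _ j]) simp
  next
    have D_G: "D!i = (L G, R G)" if i: "i < length D" "fst (D!i) \<subseteq> G" "G \<subseteq> snd (D!i)" for i
    proof -
      obtain F where F: "F \<in> \<Delta>" "D!i = (L F, R F)" using D_nth[OF i(1)] by blast
      have "L F \<subseteq> G" "G \<subseteq> R F" using i(2,3) F(2) by simp_all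
      then have "L G = L F \<and> R G = R F" by (rule stable[OF F(1)])
      then show ?thesis using F(2) by simp
    qed
    fix i j assume i: "i < length D \<and> fst (D!i) \<subseteq> G \<and> G \<subseteq> snd (D!i)"
      and j: "j < length D \<and> fst (D!j) \<subseteq> G \<and> G \<subseteq> snd (D!j)"
    then have "D!i = D!j" using D_G[of i] D_G[of j] by simp
    then show "i = j" using i j D(2) by (simp add: nth_eq_iff_index_eq)
  qed
  ultimately have "interval_partition \<Delta> D" by (simp add: interval_partition_def)
  then show ?thesis using D(1) by auto
qed

lemma interval_partition_unique:
  assumes "interval_partition \<Delta> D" "G \<in> \<Delta>"
    and "i < length D" "fst (D!i) \<subseteq> G" "G \<subseteq> snd (D!i)"
    and "j < length D" "fst (D!j) \<subseteq> G" "G \<subseteq> snd (D!j)"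
  shows "i = j"
proof -
  have "\<exists>!i. i < length D \<and> fst (D!i) \<subseteq> G \<and> G \<subseteq> snd (D!i)"
    using assms(1,2) by (simp add: interval_partition_def)
  then show ?thesis using assms(3-8) by (simp add: Ex1_def) metis
qed

definition interval_index :: "('v set \<times> 'v set) list \<Rightarrow> 'v set \<Rightarrow> nat" where
  "interval_index D G = (THE i. i < length D \<and> fst (D!i) \<subseteq> G \<and> G \<subseteq> snd (D!i))"

lemma interval_index:
  assumes "interval_partition \<Delta> D" "G \<in> \<Delta>"
  shows "interval_index D G < length D" "fst (D ! interval_index D G) \<subseteq> G"
    "G \<subseteq> snd (D ! interval_index D G)"
proof -
  have "\<exists>!i. i < length D \<and> fst (D!i) \<subseteq> G \<and> G \<subseteq> snd (D!i)"
    using assms by (simp add: interval_partition_def)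
  then have "interval_index D G < length D \<and> fst (D ! interval_index D G) \<subseteq> G \<and>
      G \<subseteq> snd (D ! interval_index D G)"
    unfolding interval_index_def by (rule theI')
  then show "interval_index D G < length D" "fst (D ! interval_index D G) \<subseteq> G"
    "G \<subseteq> snd (D ! interval_index D G)" by simp_all
qed

locale peo_cover =
  fixes V :: "'v set" and E :: "'v set set" and k :: nat
    and H :: "nat \<Rightarrow> 'v set set" and r :: "nat \<Rightarrow> 'v \<Rightarrow> nat"
  assumes finite_V: "finite V" and simple: "simple_graph_on V E"
    and cover: "E = (\<Union>i<k. H i)"
    and peo: "\<And>i. i < k \<Longrightarrow> perfect_elimination_order V (compl_graph V (H i)) (r i)"
begin

lemma H_subset: "i < k \<Longrightarrow> H i \<subseteq> E"
  using cover by auto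

lemma inj_r: "i < k \<Longrightarrow> inj_on (r i) V"
  using peo by (simp add: perfect_elimination_order_def)

lemma arg_min_on_mem: "F \<subseteq> V \<Longrightarrow> F \<noteq> {} \<Longrightarrow> arg_min_on (r i) F \<in> F"
  using arg_min_if_finite(1) finite_subset[OF _ finite_V] by blast

definition lower_face :: "'v set \<Rightarrow> 'v set" where
  "lower_face F = (if F = {} then {} else (\<lambda>i. arg_min_on (r i) F) ` {..<k})"

text \<open>The empty face is its own interval [{}, {}], except for k = 0 (then E = {}), where the
  single interval [{}, V] covers everything; for F = {} the minima arg_min_on (r i) F are junk.\<close>

definition upper_face :: "'v set \<Rightarrow> 'v set" where
  "upper_face F = (if F = {} \<and> 0 < k then {}
     else V \<inter> (\<Inter>i<k. later_non_neighbours V (H i) (r i) (arg_min_on (r i) F)))"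

lemma lower_face_subset: "F \<subseteq> V \<Longrightarrow> lower_face F \<subseteq> F"
  using arg_min_on_mem by (auto simp: lower_face_def)

lemma card_lower_face: "card (lower_face F) \<le> k"
  using card_image_le[of "{..<k}" "\<lambda>i. arg_min_on (r i) F"] by (simp add: lower_face_def)

lemma subset_upper_face:
  assumes "F \<subseteq> V" "indep E F"
  shows "F \<subseteq> upper_face F"
proof (cases "F = {}")
  case False
  have "F \<subseteq> later_non_neighbours V (H i) (r i) (arg_min_on (r i) F)" if "i < k" for i
    using subset_later_non_neighbours_arg_min[OF inj_r[OF that] assms(1) _ False]
      finite_subset[OF assms(1) finite_V] indep_antimono[OF assms(2) H_subset[OF that]] by blast
  then show ?thesis using False assms(1) by (auto simp: upper_face_def)
qed simp

lemma indep_upper_face: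
  assumes "F \<subseteq> V"
  shows "indep E (upper_face F)"
  unfolding indep_def
proof (intro ballI notI)
  fix e assume e: "e \<in> E" "e \<subseteq> upper_face F"
  then obtain i where i: "i < k" "e \<in> H i" using cover by blast
  show False
  proof (cases "F = {}")
    case True
    then have "e = {}" using e(2) i(1) by (simp add: upper_face_def)
    then show False using simple e(1) unfolding simple_graph_on_def by blast
  next
    case False
    define m where "m = arg_min_on (r i) F"
    have "m \<in> V" using arg_min_on_mem[OF assms False] assms by (auto simp: m_def)
    then have "indep (H i) (later_non_neighbours V (H i) (r i) m)"
      by (rule indep_later_non_neighbours[OF simple_graph_on_mono[OF simple H_subset[OF i(1)]] peo[OF i(1)]])
    moreover have "e \<subseteq> later_non_neighbours V (H i) (r i) m"
      using e(2) i(1) False by (auto simp: upper_face_def m_def)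
    ultimately show False using i(2) unfolding indep_def by blast
  qed
qed

lemma faces_stable:
  assumes F: "F \<subseteq> V" and G: "lower_face F \<subseteq> G" "G \<subseteq> upper_face F"
  shows "lower_face G = lower_face F \<and> upper_face G = upper_face F"
proof (cases "F = {}")
  case True
  then show ?thesis using G by (auto simp: lower_face_def upper_face_def)
next
  case False
  have same_min: "arg_min_on (r i) G = arg_min_on (r i) F" if i: "i < k" for i
  proof (rule arg_min_on_later_non_neighbours[OF inj_r[OF i]])
    show "arg_min_on (r i) F \<in> V" using arg_min_on_mem[OF F False] F by blast
    show "arg_min_on (r i) F \<in> G" using G(1) False i by (auto simp: lower_face_def)
    show "G \<subseteq> later_non_neighbours V (H i) (r i) (arg_min_on (r i) F)"
      using G(2) False i by (auto simp: upper_face_def)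
  qed
  have "G \<noteq> {}" if "0 < k"
    using G(1) False that by (auto simp: lower_face_def)
  then show ?thesis using False same_min by (auto simp: lower_face_def upper_face_def)
qed

lemma interval_partition_indep_faces:
  "\<exists>D. interval_partition {F. F \<subseteq> V \<and> indep E F} D \<and> (\<forall>(U, Z)\<in>set D. card U \<le> k)"
proof -
  let ?\<Delta> = "{F. F \<subseteq> V \<and> indep E F}"
  have "finite ?\<Delta>" using finite_V by simp
  moreover have "lower_face F \<subseteq> F \<and> F \<subseteq> upper_face F \<and> upper_face F \<in> ?\<Delta>" if "F \<in> ?\<Delta>" for F
    using that lower_face_subset subset_upper_face indep_upper_face by (auto simp: upper_face_def)
  moreover have "lower_face G = lower_face F \<and> upper_face G = upper_face F"
    if "F \<in> ?\<Delta>" "lower_face F \<subseteq> G" "G \<subseteq> upper_face F" for F G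
    using faces_stable that by blast
  ultimately obtain D where "interval_partition ?\<Delta> D" "set D = (\<lambda>F. (lower_face F, upper_face F)) ` ?\<Delta>"
    using interval_partition_of_closure[of ?\<Delta> lower_face upper_face] by blast
  then show ?thesis using card_lower_face by (intro exI[of _ D]) auto
qed

end

lemma cochordal_cover_interval_partition:
  assumes "finite V" "simple_graph_on V E" "\<forall>H\<in>set Hs. H \<subseteq> E \<and> cochordal V H" "\<Union>(set Hs) = E"
  shows "\<exists>D. interval_partition {F. F \<subseteq> V \<and> indep E F} D \<and> (\<forall>(U, Z)\<in>set D. card U \<le> length Hs)"
proof -
  have "\<exists>r. perfect_elimination_order V (compl_graph V (Hs!i)) r" if "i < length Hs" for i
  proof -
    have "cochordal V (Hs!i)" using assms(3) that by auto
    then show ?thesis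
      using chordal_perfect_elimination_order[OF assms(1) simple_graph_on_compl_graph]
      by (simp add: cochordal_def)
  qed
  then obtain r where "\<And>i. i < length Hs \<Longrightarrow> perfect_elimination_order V (compl_graph V (Hs!i)) (r i)"
    by metis
  moreover have "E = (\<Union>i<length Hs. Hs!i)"
    using assms(4) by (auto simp: set_conv_nth)
  ultimately interpret peo_cover V E "length Hs" "(!) Hs" r
    using assms(1,2) by unfold_locales
  show ?thesis by (rule interval_partition_indep_faces)
qed

definition sqfree_exp :: "nat set \<Rightarrow> nat \<Rightarrow>\<^sub>0 nat" where
  "sqfree_exp U = (\<Sum>i\<in>U. Poly_Mapping.single i 1)"

lemma sqfree_mono_eq_single: "sqfree_mono U = Poly_Mapping.single (sqfree_exp U) 1"
  by (simp add: sqfree_mono_def sqfree_exp_def)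

lemma lookup_sqfree_exp: "finite U \<Longrightarrow> Poly_Mapping.lookup (sqfree_exp U) i = (if i \<in> U then 1 else 0)"
  by (simp add: sqfree_exp_def Poly_Mapping.lookup_sum Poly_Mapping.lookup_single when_def)

lemma keys_sqfree_exp: "finite U \<Longrightarrow> Poly_Mapping.keys (sqfree_exp U) = U"
  by (auto simp: in_keys_iff lookup_sqfree_exp split: if_splits)

lemma keys_add_nat:
  "Poly_Mapping.keys ((a :: 'x \<Rightarrow>\<^sub>0 nat) + b) = Poly_Mapping.keys a \<union> Poly_Mapping.keys b"
  by (auto simp: in_keys_iff Poly_Mapping.lookup_add)

lemma keys_diff_nat: "Poly_Mapping.keys ((a :: 'x \<Rightarrow>\<^sub>0 nat) - b) \<subseteq> Poly_Mapping.keys a"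
  by (auto simp: in_keys_iff Poly_Mapping.lookup_minus)

lemma sqfree_exp_add_diff:
  "finite U \<Longrightarrow> U \<subseteq> Poly_Mapping.keys m \<Longrightarrow> sqfree_exp U + (m - sqfree_exp U) = m"
  by (rule poly_mapping_eqI)
    (auto simp: Poly_Mapping.lookup_add Poly_Mapping.lookup_minus lookup_sqfree_exp in_keys_iff)

lemma poly_mapping_sum_single:
  "(\<Sum>m\<in>Poly_Mapping.keys p. Poly_Mapping.single m (Poly_Mapping.lookup p m)) = p"
  by (rule poly_mapping_eqI)
    (simp add: Poly_Mapping.lookup_sum Poly_Mapping.lookup_single when_def in_keys_iff)

lemma lookup_single_mult:
  fixes p :: "('a::cancel_comm_monoid_add) \<Rightarrow>\<^sub>0 ('k::comm_semiring_1)"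
  shows "Poly_Mapping.lookup (Poly_Mapping.single u c * p) (u + m) = c * Poly_Mapping.lookup p m"
proof -
  have "Poly_Mapping.single u c * p =
      (\<Sum>m'\<in>Poly_Mapping.keys p. Poly_Mapping.single (u + m') (c * Poly_Mapping.lookup p m'))"
    by (subst (1) poly_mapping_sum_single[symmetric]) (simp add: sum_distrib_left mult_single)
  then have "Poly_Mapping.lookup (Poly_Mapping.single u c * p) (u + m) =
      (\<Sum>m'\<in>Poly_Mapping.keys p. if m' = m then c * Poly_Mapping.lookup p m' else 0)"
    by (simp add: Poly_Mapping.lookup_sum Poly_Mapping.lookup_single when_def)
  also have "\<dots> = c * Poly_Mapping.lookup p m" by (simp add: in_keys_iff)
  finally show ?thesis .
qed

lemma lookup_sqfree_mono_mult:
  fixes p :: "'k::comm_semiring_1 mpoly"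
  shows "Poly_Mapping.lookup (sqfree_mono U * p) (sqfree_exp U + m) = Poly_Mapping.lookup p m"
  by (simp add: sqfree_mono_eq_single lookup_single_mult)

lemma keys_sqfree_mono_mult:
  fixes p :: "'k::comm_semiring_1 mpoly"
  assumes "finite U" "k \<in> Poly_Mapping.keys (sqfree_mono U * p)"
  shows "\<exists>m\<in>Poly_Mapping.keys p. k = sqfree_exp U + m \<and> Poly_Mapping.keys k = U \<union> Poly_Mapping.keys m"
  using keys_mult[of "sqfree_mono U" p] assms
  by (auto simp: sqfree_mono_eq_single keys_add_nat keys_sqfree_exp split: if_splits)

lemma sqfree_mono_mult_single:
  assumes "finite U" "U \<subseteq> Poly_Mapping.keys m"
  shows "sqfree_mono U * Poly_Mapping.single (m - sqfree_exp U) c = Poly_Mapping.single m (c :: 'k::comm_semiring_1)"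
  using sqfree_exp_add_diff[OF assms] by (simp add: sqfree_mono_eq_single mult_single)

lemma polys_in_sum: "(\<And>x. x \<in> X \<Longrightarrow> f x \<in> polys_in Z) \<Longrightarrow> sum f X \<in> polys_in Z"
  unfolding polys_in_def using keys_sum[of f X] by blast

lemma polys_in_single: "Poly_Mapping.keys m \<subseteq> Z \<Longrightarrow> Poly_Mapping.single m c \<in> polys_in Z"
  by (simp add: polys_in_def)

lemma polys_in_single_diff:
  "Poly_Mapping.keys m \<subseteq> Z \<Longrightarrow> Poly_Mapping.single (m - u) c \<in> polys_in Z"
  using keys_diff_nat[of m u] by (intro polys_in_single) blast

lemma zero_in_edge_ideal: "(0 :: 'k::comm_ring_1 mpoly) \<in> edge_ideal n E"
  unfolding edge_ideal_def by (auto intro: exI[of _ "\<lambda>e. 0"] simp: polys_in_def)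

lemma lookup_edge_ideal_indep:
  fixes p :: "'k::comm_ring_1 mpoly"
  assumes "\<forall>e\<in>E. finite e" "p \<in> edge_ideal n E" "indep E (Poly_Mapping.keys m)"
  shows "Poly_Mapping.lookup p m = 0"
proof -
  obtain q where q: "p = (\<Sum>e\<in>E. sqfree_mono e * q e)"
    using assms(2) unfolding edge_ideal_def by (auto simp: mult.commute)
  have "m \<notin> Poly_Mapping.keys (sqfree_mono e * q e)" if e: "e \<in> E" for e
  proof
    assume "m \<in> Poly_Mapping.keys (sqfree_mono e * q e)"
    then have "e \<subseteq> Poly_Mapping.keys m"
      using keys_sqfree_mono_mult[of e m "q e"] assms(1) e by blast
    then show False using assms(3) e unfolding indep_def by blast
  qed
  then show ?thesis unfolding q by (simp add: Poly_Mapping.lookup_sum in_keys_iff)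
qed

lemma sum_single_in_edge_ideal:
  fixes c :: "(nat \<Rightarrow>\<^sub>0 nat) \<Rightarrow> 'k::comm_ring_1"
  assumes "finite E" "\<forall>e\<in>E. finite e" "finite K"
    and K: "\<And>m. m \<in> K \<Longrightarrow> Poly_Mapping.keys m \<subseteq> {..<n} \<and> \<not> indep E (Poly_Mapping.keys m)"
  shows "(\<Sum>m\<in>K. Poly_Mapping.single m (c m)) \<in> edge_ideal n E"
proof -
  have "\<forall>m\<in>K. \<exists>e. e \<in> E \<and> e \<subseteq> Poly_Mapping.keys m" using K unfolding indep_def by blast
  then obtain ch where ch: "\<And>m. m \<in> K \<Longrightarrow> ch m \<in> E \<and> ch m \<subseteq> Poly_Mapping.keys m"
    by metis
  define q where "q e = (\<Sum>m\<in>{m\<in>K. ch m = e}. Poly_Mapping.single (m - sqfree_exp e) (c m))" for e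
  have "q e \<in> polys_in {..<n}" for e
    unfolding q_def using K by (intro polys_in_sum polys_in_single_diff) blast
  moreover have "(\<Sum>e\<in>E. q e * sqfree_mono e) = (\<Sum>m\<in>K. Poly_Mapping.single m (c m))"
  proof -
    have "q e * sqfree_mono e = (\<Sum>m\<in>{m\<in>K. ch m = e}. Poly_Mapping.single m (c m))" if "e \<in> E" for e
      unfolding q_def sum_distrib_right
    proof (rule sum.cong[OF refl])
      fix m assume "m \<in> {m\<in>K. ch m = e}"
      then have "finite e" "e \<subseteq> Poly_Mapping.keys m" using ch assms(2) that by auto
      then show "Poly_Mapping.single (m - sqfree_exp e) (c m) * sqfree_mono e = Poly_Mapping.single m (c m)"
        by (simp add: mult.commute sqfree_mono_mult_single)
    qed
    then have "(\<Sum>e\<in>E. q e * sqfree_mono e) = (\<Sum>e\<in>E. \<Sum>m\<in>{m\<in>K. ch m = e}. Poly_Mapping.single m (c m))"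
      by simp
    also have "\<dots> = (\<Sum>m\<in>K. Poly_Mapping.single m (c m))"
      using ch by (intro sum.group[OF assms(3,1)]) auto
    finally show ?thesis .
  qed
  ultimately show ?thesis unfolding edge_ideal_def by (auto intro!: exI[of _ q])
qed

lemma interval_partition_nth:
  fixes n :: nat
  assumes "interval_partition {F. F \<subseteq> {..<n} \<and> indep E F} D" "i < length D"
  shows "fst (D!i) \<subseteq> snd (D!i)" "snd (D!i) \<subseteq> {..<n}" "indep E (snd (D!i))" "finite (fst (D!i))"
proof -
  show sub: "fst (D!i) \<subseteq> snd (D!i)" "snd (D!i) \<subseteq> {..<n}" "indep E (snd (D!i))"
    using assms unfolding interval_partition_def by auto
  have "finite (snd (D!i))" using sub(2) by (rule finite_subset) simp
  then show "finite (fst (D!i))" using sub(1) by (rule finite_subset[rotated])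
qed

lemma keys_sqfree_mono_mult_interval:
  fixes p :: "'k::comm_semiring_1 mpoly"
  assumes "p \<in> polys_in Z" "U \<subseteq> Z" "finite U" "k \<in> Poly_Mapping.keys (sqfree_mono U * p)"
  shows "U \<subseteq> Poly_Mapping.keys k" "Poly_Mapping.keys k \<subseteq> Z"
proof -
  obtain m where "m \<in> Poly_Mapping.keys p" "Poly_Mapping.keys k = U \<union> Poly_Mapping.keys m"
    using keys_sqfree_mono_mult[OF assms(3,4)] by blast
  then show "U \<subseteq> Poly_Mapping.keys k" "Poly_Mapping.keys k \<subseteq> Z"
    using assms(1,2) unfolding polys_in_def by auto
qed

lemma sqfree_mono_mult_in_edge_ideal_imp_zero:
  fixes p :: "'k::comm_ring_1 mpoly"
  assumes "\<forall>e\<in>E. finite e" "indep E Z" "U \<subseteq> Z" "finite U" "p \<in> polys_in Z"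
    and "sqfree_mono U * p \<in> edge_ideal n E"
  shows "p = 0"
proof (rule poly_mapping_eqI)
  fix m
  show "Poly_Mapping.lookup p m = Poly_Mapping.lookup 0 m"
  proof (cases "m \<in> Poly_Mapping.keys p")
    case True
    then have "Poly_Mapping.keys (sqfree_exp U + m) \<subseteq> Z"
      using assms(3-5) by (auto simp: polys_in_def keys_add_nat keys_sqfree_exp)
    then have "indep E (Poly_Mapping.keys (sqfree_exp U + m))" by (rule indep_subset[OF assms(2)])
    then have "Poly_Mapping.lookup (sqfree_mono U * p) (sqfree_exp U + m) = 0"
      by (rule lookup_edge_ideal_indep[OF assms(1,6)])
    then show ?thesis by (simp add: lookup_sqfree_mono_mult)
  qed (simp add: in_keys_iff)
qed

lemma interval_partition_direct:
  fixes g :: "nat \<Rightarrow> 'k::comm_ring_1 mpoly"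
  assumes fin: "\<forall>e\<in>E. finite e" and D: "interval_partition {F. F \<subseteq> {..<n} \<and> indep E F} D"
    and g: "\<forall>i<length D. g i \<in> polys_in (snd (D!i))"
    and sum: "(\<Sum>i<length D. sqfree_mono (fst (D!i)) * g i) \<in> edge_ideal n E"
    and i: "i < length D"
  shows "sqfree_mono (fst (D!i)) * g i = 0"
proof -
  define t where "t j = sqfree_mono (fst (D!j)) * g j" for j
  have keys_t: "fst (D!j) \<subseteq> Poly_Mapping.keys k" "Poly_Mapping.keys k \<subseteq> snd (D!j)"
    if "j < length D" "Poly_Mapping.lookup (t j) k \<noteq> 0" for j k
    using keys_sqfree_mono_mult_interval[of "g j" "snd (D!j)" "fst (D!j)" k] g that
      interval_partition_nth[OF D that(1)] by (simp_all add: t_def in_keys_iff)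
  have "Poly_Mapping.lookup (t i) k = 0" for k
  proof (rule ccontr)
    assume nz: "Poly_Mapping.lookup (t i) k \<noteq> 0"
    have "Poly_Mapping.keys k \<subseteq> {..<n}"
      using keys_t(2)[OF i nz] interval_partition_nth(2)[OF D i] by (rule order_trans)
    moreover have "indep E (Poly_Mapping.keys k)"
      using interval_partition_nth(3)[OF D i] keys_t(2)[OF i nz] by (rule indep_subset)
    ultimately have k_face: "Poly_Mapping.keys k \<in> {F. F \<subseteq> {..<n} \<and> indep E F}" by simp
    have rest: "Poly_Mapping.lookup (t j) k = 0" if j: "j \<in> {..<length D} - {i}" for j
    proof (rule ccontr)
      assume nz_j: "Poly_Mapping.lookup (t j) k \<noteq> 0"
      have "j < length D" using j by simp
      from interval_partition_unique[OF D k_face this keys_t[OF this nz_j] i keys_t[OF i nz]]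
      show False using j by simp
    qed
    have "Poly_Mapping.lookup (\<Sum>j<length D. t j) k =
        Poly_Mapping.lookup (t i) k + (\<Sum>j\<in>{..<length D} - {i}. Poly_Mapping.lookup (t j) k)"
      using i by (simp add: Poly_Mapping.lookup_sum Poly_Mapping.lookup_add sum.remove)
    also have "\<dots> = Poly_Mapping.lookup (t i) k" using rest by simp
    finally have "Poly_Mapping.lookup (\<Sum>j<length D. t j) k = Poly_Mapping.lookup (t i) k" .
    moreover have "Poly_Mapping.lookup (\<Sum>j<length D. t j) k = 0"
      using k_face by (intro lookup_edge_ideal_indep[OF fin sum[folded t_def]]) simp
    ultimately show False using nz by simp
  qed
  then show ?thesis by (intro poly_mapping_eqI) (simp add: t_def)
qed

lemma edge_ideal_standard_part:
  fixes f :: "'k::comm_ring_1 mpoly"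
  assumes "finite E" "\<forall>e\<in>E. finite e" "f \<in> polys_in {..<n}"
  shows "f - (\<Sum>m | m \<in> Poly_Mapping.keys f \<and> indep E (Poly_Mapping.keys m).
    Poly_Mapping.single m (Poly_Mapping.lookup f m)) \<in> edge_ideal n E"
proof -
  define M where "M = {m \<in> Poly_Mapping.keys f. indep E (Poly_Mapping.keys m)}"
  have "(\<Sum>m\<in>Poly_Mapping.keys f. Poly_Mapping.single m (Poly_Mapping.lookup f m)) =
      (\<Sum>m\<in>Poly_Mapping.keys f - M. Poly_Mapping.single m (Poly_Mapping.lookup f m)) +
      (\<Sum>m\<in>M. Poly_Mapping.single m (Poly_Mapping.lookup f m))"
    by (rule sum.subset_diff) (auto simp: M_def)
  then have "f = (\<Sum>m\<in>Poly_Mapping.keys f - M. Poly_Mapping.single m (Poly_Mapping.lookup f m)) +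
      (\<Sum>m\<in>M. Poly_Mapping.single m (Poly_Mapping.lookup f m))"
    by (simp only: poly_mapping_sum_single)
  then have "f - (\<Sum>m\<in>M. Poly_Mapping.single m (Poly_Mapping.lookup f m)) =
      (\<Sum>m\<in>Poly_Mapping.keys f - M. Poly_Mapping.single m (Poly_Mapping.lookup f m))"
    by (metis add_diff_cancel_right')
  moreover have "(\<Sum>m\<in>Poly_Mapping.keys f - M. Poly_Mapping.single m (Poly_Mapping.lookup f m)) \<in> edge_ideal n E"
  proof (rule sum_single_in_edge_ideal[OF assms(1,2)])
    fix m assume "m \<in> Poly_Mapping.keys f - M"
    then show "Poly_Mapping.keys m \<subseteq> {..<n} \<and> \<not> indep E (Poly_Mapping.keys m)"
      using assms(3) by (auto simp: M_def polys_in_def)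
  qed simp
  ultimately show ?thesis by (simp add: M_def)
qed

lemma interval_partition_spanning:
  fixes f :: "'k::comm_ring_1 mpoly"
  assumes fin: "finite E" "\<forall>e\<in>E. finite e"
    and D: "interval_partition {F. F \<subseteq> {..<n} \<and> indep E F} D" and f: "f \<in> polys_in {..<n}"
  shows "\<exists>g. (\<forall>i<length D. g i \<in> polys_in (snd (D!i))) \<and>
    f - (\<Sum>i<length D. sqfree_mono (fst (D!i)) * g i) \<in> edge_ideal n E"
proof -
  define M where "M = {m \<in> Poly_Mapping.keys f. indep E (Poly_Mapping.keys m)}"
  define J where "J m = interval_index D (Poly_Mapping.keys m)" for m :: "nat \<Rightarrow>\<^sub>0 nat"
  have J: "J m < length D" "fst (D!J m) \<subseteq> Poly_Mapping.keys m" "Poly_Mapping.keys m \<subseteq> snd (D!J m)"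
    if "m \<in> M" for m
  proof -
    have "Poly_Mapping.keys m \<in> {F. F \<subseteq> {..<n} \<and> indep E F}"
      using that f by (auto simp: M_def polys_in_def)
    then show "J m < length D" "fst (D!J m) \<subseteq> Poly_Mapping.keys m" "Poly_Mapping.keys m \<subseteq> snd (D!J m)"
      unfolding J_def by (rule interval_index[OF D])+
  qed
  define g where "g j = (\<Sum>m\<in>{m\<in>M. J m = j}. Poly_Mapping.single (m - sqfree_exp (fst (D!j))) (Poly_Mapping.lookup f m))"
    for j
  have "g j \<in> polys_in (snd (D!j))" for j
    unfolding g_def using J(3) by (intro polys_in_sum polys_in_single_diff) auto
  moreover have "(\<Sum>j<length D. sqfree_mono (fst (D!j)) * g j) = (\<Sum>m\<in>M. Poly_Mapping.single m (Poly_Mapping.lookup f m))"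
  proof -
    have "sqfree_mono (fst (D!j)) * g j = (\<Sum>m\<in>{m\<in>M. J m = j}. Poly_Mapping.single m (Poly_Mapping.lookup f m))"
      if j: "j < length D" for j
      unfolding g_def sum_distrib_left
    proof (rule sum.cong[OF refl])
      fix m assume "m \<in> {m\<in>M. J m = j}"
      then have "fst (D!j) \<subseteq> Poly_Mapping.keys m" using J(2)[of m] by auto
      then show "sqfree_mono (fst (D!j)) * Poly_Mapping.single (m - sqfree_exp (fst (D!j))) (Poly_Mapping.lookup f m) =
          Poly_Mapping.single m (Poly_Mapping.lookup f m)"
        by (rule sqfree_mono_mult_single[OF interval_partition_nth(4)[OF D j]])
    qed
    then have "(\<Sum>j<length D. sqfree_mono (fst (D!j)) * g j) =
        (\<Sum>j<length D. \<Sum>m\<in>{m\<in>M. J m = j}. Poly_Mapping.single m (Poly_Mapping.lookup f m))"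
      by simp
    also have "\<dots> = (\<Sum>m\<in>M. Poly_Mapping.single m (Poly_Mapping.lookup f m))"
      using J(1) by (intro sum.group) (auto simp: M_def)
    finally show ?thesis .
  qed
  ultimately show ?thesis
    using edge_ideal_standard_part[OF fin f] unfolding M_def by (intro exI[of _ g]) auto
qed

lemma stanley_decomp_of_interval_partition:
  assumes "finite E" "\<forall>e\<in>E. finite e" "interval_partition {F. F \<subseteq> {..<n} \<and> indep E F} D"
  shows "stanley_decomp TYPE('k::field) n (edge_ideal n E) D"
  unfolding stanley_decomp_def
proof (intro conjI allI impI ballI)
  fix i assume i: "i < length D"
  show "fst (D!i) \<subseteq> snd (D!i)" "snd (D!i) \<subseteq> {..<n}" by (rule interval_partition_nth[OF assms(3) i])+
next
  fix f :: "'k mpoly" assume "f \<in> polys_in {..<n}"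
  then show "\<exists>g. (\<forall>i<length D. g i \<in> polys_in (snd (D!i))) \<and>
      f - (\<Sum>i<length D. sqfree_mono (fst (D!i)) * g i) \<in> edge_ideal n E"
    by (rule interval_partition_spanning[OF assms])
next
  fix g :: "nat \<Rightarrow> 'k mpoly" and i
  assume g: "(\<forall>i<length D. g i \<in> polys_in (snd (D!i))) \<and> (\<Sum>i<length D. sqfree_mono (fst (D!i)) * g i) \<in> edge_ideal n E"
    and i: "i < length D"
  have "sqfree_mono (fst (D!i)) * g i = 0"
    using g by (intro interval_partition_direct[OF assms(2,3) _ _ i]) simp_all
  then show "sqfree_mono (fst (D!i)) * g i \<in> edge_ideal n E" by (simp only: zero_in_edge_ideal)
next
  fix i and p :: "'k mpoly"
  assume i: "i < length D" and p: "p \<in> polys_in (snd (D!i))" "sqfree_mono (fst (D!i)) * p \<in> edge_ideal n E"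
  show "p = 0"
    by (rule sqfree_mono_mult_in_edge_ideal_imp_zero[OF assms(2) interval_partition_nth(3,1,4)[OF assms(3) i] p])
qed

theorem theorem5p6:
  fixes n :: nat and E :: "nat set set"
  assumes "simple_graph_on {..<n} E"
  shows "sreg TYPE('k::field) n (edge_ideal n E) \<le> cochord {..<n} E"
proof -
  have "E \<subseteq> Pow {..<n}" using simple_graph_on_subset_Pow[OF assms] .
  then have fin: "finite E" "\<forall>e\<in>E. finite e"
    by (simp_all add: finite_subset) (meson PowD finite_lessThan finite_subset subsetD)
  obtain Hs where Hs: "length Hs = cochord {..<n} E"
    "\<forall>H\<in>set Hs. H \<subseteq> E \<and> cochordal {..<n} H" "\<Union>(set Hs) = E"
    using cochord_attained[OF fin(1)] by blast
  obtain D where D: "interval_partition {F. F \<subseteq> {..<n} \<and> indep E F} D"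
    "\<forall>(U, Z)\<in>set D. card U \<le> length Hs"
    using cochordal_cover_interval_partition[OF _ assms Hs(2,3)] by blast
  have "stanley_decomp TYPE('k) n (edge_ideal n E) D"
    by (rule stanley_decomp_of_interval_partition[OF fin D(1)])
  then show ?thesis using D(2) Hs(1) unfolding sreg_def by (intro Least_le) auto
qed

end
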